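(* For every $U\in\mathcal U_n$, the word $q(U)$ produced by the algorithm below is the area sequence of a Dyck path of length $n$, i.e. $q(U)=(a_1,\dots,a_n)$ with $a_1=0$ and $a_i\le a_{i-1}+1$ for $2\le i\le n$.
   Context: A unit interval order on $\{1,\dots,n\}$ is a relation $\prec$ such that there are closed intervals $I_1,\dots,I_n$ of length $1$ in $\mathbb R$, numbered from left to right, with $i\prec j$ iff $I_i$ lies strictly to the left of $I_j$; $\mathcal U_n$ is the set of these. Levels: set $\ell(1)=0$ and, for $j\ge 2$, $\ell(j)=\max_{i\prec j}\ell(i)+1$, with $\ell(j)=0$ if no $i\prec j$. Algorithm: define words $q_1,\dots,q_n$, $q_i$ of length $i$, with $q_1=(0)$. Given $q_{i-1}$, let $C_i$ be the number of elements $k$ with $k\prec i$ and $\ell(k)=\ell(i)-1$. Then $q_i$ is obtained from $q_{i-1}$ by inserting a letter $\ell(i)$ directly after the (possibly empty) run of letters $\ell(i)$ that immediately follows the $C_i$-th occurrence of the letter $\ell(i)-1$ in $q_{i-1}$ (when $C_i=0$, the "0-th occurrence" is understood as the start of the word). Set $q(U)=q_n$. The area sequence of a Dyck path lists, row by row from bottom to top, the number of full unit boxes between the path and the diagonal; these are exactly the sequences described in the claim. *)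

theory Defs
  imports Complex_Main
begin

text \<open>A relation prec on {1..n} is a unit interval order if there are unit intervals
  [x i, x i + 1], numbered from left to right (non-decreasing left endpoints),
  with i prec j iff interval i lies strictly to the left of interval j.\<close>
definition unit_interval_order :: "nat \<Rightarrow> (nat \<Rightarrow> nat \<Rightarrow> bool) \<Rightarrow> bool" where
  "unit_interval_order n prec \<longleftrightarrow>
     (\<exists>x :: nat \<Rightarrow> real.
        (\<forall>i j. 1 \<le> i \<longrightarrow> i \<le> j \<longrightarrow> j \<le> n \<longrightarrow> x i \<le> x j) \<and>
        (\<forall>i j. prec i j \<longleftrightarrow> (i \<in> {1..n} \<and> j \<in> {1..n} \<and> x i + 1 < x j)))"

text \<open>Levels. In a unit interval order numbered left to right, i prec j implies i < j,
  so we only look at predecessors i < j (this makes the recursion well-founded).\<close>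
function lev :: "(nat \<Rightarrow> nat \<Rightarrow> bool) \<Rightarrow> nat \<Rightarrow> nat" where
  "lev prec j =
     (if \<exists>i\<in>{1..<j}. prec i j
      then Max ((\<lambda>i. Suc (lev prec i)) ` {i \<in> {1..<j}. prec i j})
      else 0)"
  by auto
termination by (relation "measure (\<lambda>(p, j). j)") auto


definition Ccount :: "nat \<Rightarrow> (nat \<Rightarrow> nat \<Rightarrow> bool) \<Rightarrow> nat \<Rightarrow> nat" where
  "Ccount n prec i =
     (if lev prec i = 0 then 0
      else card {k \<in> {1..n}. prec k i \<and> lev prec k = lev prec i - 1})"

text \<open>0-based index of the c-th occurrence (c \<ge> 1) of letter a in xs.\<close>
definition occ_index :: "nat list \<Rightarrow> nat \<Rightarrow> nat \<Rightarrow> nat" where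
  "occ_index xs a c =
     (LEAST m. m < length xs \<and> xs ! m = a \<and> length (filter (\<lambda>y. y = a) (take m xs)) = c - 1)"

text \<open>Insert letter L directly after the run of letters L that immediately follows the
  c-th occurrence of L - 1 (c = 0: the start of the word).\<close>
definition insert_step :: "nat list \<Rightarrow> nat \<Rightarrow> nat \<Rightarrow> nat list" where
  "insert_step xs L c =
     (let p = (if c = 0 then 0 else Suc (occ_index xs (L - 1) c));
          p' = p + length (takeWhile (\<lambda>y. y = L) (drop p xs))
      in take p' xs @ [L] @ drop p' xs)"

text \<open>The words q_1, ..., q_n (qword n prec i = q_i; q_0 is a dummy).\<close>
fun qword :: "nat \<Rightarrow> (nat \<Rightarrow> nat \<Rightarrow> bool) \<Rightarrow> nat \<Rightarrow> nat list" where
  "qword n prec 0 = []"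
| "qword n prec (Suc 0) = [0]"
| "qword n prec (Suc (Suc i)) =
     insert_step (qword n prec (Suc i)) (lev prec (Suc (Suc i))) (Ccount n prec (Suc (Suc i)))"

definition q_of :: "nat \<Rightarrow> (nat \<Rightarrow> nat \<Rightarrow> bool) \<Rightarrow> nat list" where
  "q_of n prec = qword n prec n"

end

theory Submission
  imports Defs "HOL-Library.Multiset"
begin

text \<open>Each word q_i is a rearrangement of the levels of 1, ..., i, and it stays an area
  sequence: the new letter l(i) is inserted directly after a letter l(i) - 1 or l(i)
  (or at the front when l(i) = 0), and such an insertion never creates an ascent by more
  than one.  The C_i-th occurrence of l(i) - 1 exists because the C_i elements counted
  are among the earlier elements of level l(i) - 1, whose levels all occur in q_(i-1).\<close>

definition area_sequence :: "nat list \<Rightarrow> bool" where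
  "area_sequence xs \<longleftrightarrow>
     xs \<noteq> [] \<and> xs ! 0 = 0 \<and> (\<forall>i. 1 \<le> i \<and> i < length xs \<longrightarrow> xs ! i \<le> xs ! (i - 1) + 1)"

lemma area_sequence_insert:
  assumes xs: "area_sequence xs" and p: "p \<le> length xs"
    and front: "p = 0 \<Longrightarrow> L = 0"
    and after: "0 < p \<Longrightarrow> xs ! (p - 1) \<le> L \<and> L \<le> xs ! (p - 1) + 1"
  shows "area_sequence (take p xs @ [L] @ drop p xs)"
proof -
  let ?r = "take p xs @ [L] @ drop p xs"
  have head: "xs \<noteq> []" "xs ! 0 = 0"
    and step: "\<And>i. 1 \<le> i \<Longrightarrow> i < length xs \<Longrightarrow> xs ! i \<le> xs ! (i - 1) + 1"
    using xs unfolding area_sequence_def by auto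
  have len: "length ?r = Suc (length xs)" using p by simp
  have before_p: "j < p \<Longrightarrow> ?r ! j = xs ! j" for j using p by (simp add: nth_append)
  have at_p: "?r ! p = L" using p by (simp add: nth_append)
  have beyond_p: "p < j \<Longrightarrow> j \<le> length xs \<Longrightarrow> ?r ! j = xs ! (j - 1)" for j
    using p by (simp add: nth_append min_def)
  have successor: "xs ! p \<le> L + 1" if "p < length xs"
  proof (cases "p = 0")
    case True
    then show ?thesis using head by simp
  next
    case False
    then show ?thesis using step[of p] after that by simp
  qed
  have "?r ! i \<le> ?r ! (i - 1) + 1" if "1 \<le> i" "i < length ?r" for i
  proof -
    consider "i < p" | "i = p" | "i = Suc p" | "Suc p < i" by linarith
    then show ?thesis
    proof cases
      case 1
      then show ?thesis using before_p[of i] before_p[of "i - 1"] step[of i] that p by simp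
    next
      case 2
      then show ?thesis using before_p[of "i - 1"] at_p after that by simp
    next
      case 3
      then show ?thesis using beyond_p[of i] at_p successor that len by simp
    next
      case 4
      then show ?thesis using beyond_p[of i] beyond_p[of "i - 1"] step[of "i - 1"] that len
        by simp
    qed
  qed
  moreover have "?r ! 0 = 0"
    using before_p[of 0] at_p front head by (cases "p = 0") auto
  ultimately show ?thesis unfolding area_sequence_def by auto
qed

lemma nth_occurrence_exists:
  assumes "1 \<le> c" "c \<le> count (mset xs) a"
  shows "\<exists>m < length xs. xs ! m = a \<and> length (filter (\<lambda>y. y = a) (take m xs)) = c - 1"
  using assms
proof (induction xs arbitrary: c)
  case Nil
  then show ?case by simp
next
  case (Cons y ys)
  show ?case
  proof (cases "y = a \<and> c = 1")
    case True
    then show ?thesis by (intro exI[of _ 0]) auto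
  next
    case False
    then have "1 \<le> (if y = a then c - 1 else c)"
      and "(if y = a then c - 1 else c) \<le> count (mset ys) a"
      using Cons.prems by auto
    from Cons.IH[OF this] obtain m where "m < length ys" "ys ! m = a"
      "length (filter (\<lambda>y. y = a) (take m ys)) = (if y = a then c - 1 else c) - 1"
      by blast
    then show ?thesis using False Cons.prems by (intro exI[of _ "Suc m"]) auto
  qed
qed

lemma occ_index_nth:
  assumes "1 \<le> c" "c \<le> count (mset xs) a"
  shows "occ_index xs a c < length xs \<and> xs ! occ_index xs a c = a"
  using nth_occurrence_exists[OF assms] unfolding occ_index_def by (rule LeastI2_ex) auto

lemma mset_insert_step: "mset (insert_step xs L c) = add_mset L (mset xs)"
proof -
  have "mset (take p xs @ [L] @ drop p xs) = add_mset L (mset xs)" for p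
    using mset_append[of "take p xs" "drop p xs"] by simp
  then show ?thesis unfolding insert_step_def Let_def by blast
qed

lemma last_takeWhile_eq:
  assumes "takeWhile (\<lambda>y. y = L) ys \<noteq> []"
  shows "ys ! (length (takeWhile (\<lambda>y. y = L) ys) - 1) = L"
proof -
  let ?w = "takeWhile (\<lambda>y. y = L) ys"
  let ?k = "length ?w - 1"
  have k: "?k < length ?w" using assms by simp
  then have "?w ! ?k \<in> set ?w" by (rule nth_mem)
  then have "?w ! ?k = L" by (blast dest: set_takeWhileD)
  then show ?thesis using takeWhile_nth[OF k] by simp
qed

lemma area_sequence_insert_step:
  assumes xs: "area_sequence xs"
    and c: "(L = 0 \<and> c = 0) \<or> (0 < L \<and> 1 \<le> c \<and> c \<le> count (mset xs) (L - 1))"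
  shows "area_sequence (insert_step xs L c)"
proof -
  define p where "p = (if c = 0 then 0 else Suc (occ_index xs (L - 1) c))"
  define t where "t = length (takeWhile (\<lambda>y. y = L) (drop p xs))"
  have start: "p = 0 \<and> L = 0 \<or> 0 < p \<and> p \<le> length xs \<and> xs ! (p - 1) = L - 1 \<and> 0 < L"
    using c occ_index_nth[of c xs "L - 1"] unfolding p_def by auto
  then have p_le: "p \<le> length xs" by auto
  have pt_le: "p + t \<le> length xs"
    using length_takeWhile_le[of "\<lambda>y. y = L" "drop p xs"] p_le unfolding t_def by simp
  have run: "xs ! (p + t - 1) = L" if "0 < t"
    using last_takeWhile_eq[of L "drop p xs"] that pt_le unfolding t_def
    by (simp add: add.commute add_diff_assoc)
  have "area_sequence (take (p + t) xs @ [L] @ drop (p + t) xs)"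
  proof (rule area_sequence_insert[OF xs pt_le])
    show "p + t = 0 \<Longrightarrow> L = 0" using start by auto
    show "xs ! (p + t - 1) \<le> L \<and> L \<le> xs ! (p + t - 1) + 1" if "0 < p + t"
      using start run that by (cases "t = 0") auto
  qed
  then show ?thesis unfolding insert_step_def Let_def p_def t_def by simp
qed

lemma unit_interval_order_prec_less:
  assumes "unit_interval_order n prec" "prec k i"
  shows "1 \<le> k \<and> k < i \<and> i \<le> n"
proof -
  obtain x :: "nat \<Rightarrow> real"
    where mono: "\<forall>i j. 1 \<le> i \<longrightarrow> i \<le> j \<longrightarrow> j \<le> n \<longrightarrow> x i \<le> x j"
    and prec: "\<forall>i j. prec i j \<longleftrightarrow> (i \<in> {1..n} \<and> j \<in> {1..n} \<and> x i + 1 < x j)"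
    using assms(1) unfolding unit_interval_order_def by blast
  have "k \<in> {1..n}" "i \<in> {1..n}" "x k + 1 < x i" using prec assms(2) by auto
  moreover have "\<not> i \<le> k" using mono calculation by force
  ultimately show ?thesis by auto
qed

declare lev.simps[simp del]

lemma lev_pos_imp_pred:
  assumes "0 < lev prec i"
  shows "\<exists>k \<in> {1..<i}. prec k i \<and> lev prec k = lev prec i - 1"
proof -
  let ?P = "{k \<in> {1..<i}. prec k i}"
  have nonempty: "?P \<noteq> {}"
    using assms lev.simps[of prec i] by (auto split: if_splits)
  then have "lev prec i = Max ((\<lambda>k. Suc (lev prec k)) ` ?P)"
    using lev.simps[of prec i] by auto
  moreover have "Max ((\<lambda>k. Suc (lev prec k)) ` ?P) \<in> (\<lambda>k. Suc (lev prec k)) ` ?P"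
    using nonempty by (intro Max_in) auto
  ultimately show ?thesis by force
qed

lemma Ccount_pos:
  assumes "unit_interval_order n prec" "0 < lev prec i"
  shows "1 \<le> Ccount n prec i"
proof -
  obtain k where k: "prec k i" "lev prec k = lev prec i - 1"
    using lev_pos_imp_pred[OF assms(2)] by blast
  then have "k \<in> {k \<in> {1..n}. prec k i \<and> lev prec k = lev prec i - 1}"
    using unit_interval_order_prec_less[OF assms(1) k(1)] by auto
  then have "card {k \<in> {1..n}. prec k i \<and> lev prec k = lev prec i - 1} \<noteq> 0"
    by (auto simp: card_eq_0_iff)
  moreover have "Ccount n prec i = card {k \<in> {1..n}. prec k i \<and> lev prec k = lev prec i - 1}"
    unfolding Ccount_def using assms(2) by simp
  ultimately show ?thesis by linarith
qed

lemma Ccount_le_card_earlier: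
  assumes "unit_interval_order n prec"
  shows "Ccount n prec i \<le> card {k \<in> {1..<i}. lev prec k = lev prec i - 1}"
proof -
  have "{k \<in> {1..n}. prec k i \<and> lev prec k = lev prec i - 1}
          \<subseteq> {k \<in> {1..<i}. lev prec k = lev prec i - 1}"
    using unit_interval_order_prec_less[OF assms] by auto
  then show ?thesis unfolding Ccount_def by (simp add: card_mono)
qed

lemma count_image_mset_mset_set:
  assumes "finite A"
  shows "count (image_mset f (mset_set A)) a = card {k \<in> A. f k = a}"
  using assms by (simp add: count_conv_size_mset filter_mset_image_mset filter_mset_mset_set)

lemma qword_invariant:
  assumes "unit_interval_order n prec" "1 \<le> i" "i \<le> n"
  shows "area_sequence (qword n prec i) \<and>
         mset (qword n prec i) = image_mset (lev prec) (mset_set {1..i})"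
  using assms(2,3)
proof (induction i rule: nat_induct_at_least)
  case base
  have "lev prec 1 = 0" by (simp add: lev.simps)
  then show ?case by (simp add: area_sequence_def)
next
  case (Suc i)
  let ?xs = "qword n prec i" and ?L = "lev prec (Suc i)" and ?c = "Ccount n prec (Suc i)"
  have IH: "area_sequence ?xs" "mset ?xs = image_mset (lev prec) (mset_set {1..i})"
    using Suc by auto
  have "?c \<le> card {k \<in> {1..<Suc i}. lev prec k = ?L - 1}"
    by (rule Ccount_le_card_earlier[OF assms(1)])
  also have "{k \<in> {1..<Suc i}. lev prec k = ?L - 1} = {k \<in> {1..i}. lev prec k = ?L - 1}"
    by auto
  also have "card \<dots> = count (mset ?xs) (?L - 1)"
    using IH(2) count_image_mset_mset_set[of "{1..i}" "lev prec"] by simp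
  finally have "?c \<le> count (mset ?xs) (?L - 1)" .
  then have "(?L = 0 \<and> ?c = 0) \<or> (0 < ?L \<and> 1 \<le> ?c \<and> ?c \<le> count (mset ?xs) (?L - 1))"
    using Ccount_pos[OF assms(1), of "Suc i"] unfolding Ccount_def by auto
  moreover have "qword n prec (Suc i) = insert_step ?xs ?L ?c"
    using \<open>1 \<le> i\<close> by (cases i) auto
  moreover have "mset_set {1..Suc i} = add_mset (Suc i) (mset_set {1..i})"
    by (simp add: atLeastAtMostSuc_conv)
  ultimately show ?case
    using area_sequence_insert_step[OF IH(1)] mset_insert_step IH(2) by simp
qed

theorem mainTheorem4:
  fixes n :: nat and prec :: "nat \<Rightarrow> nat \<Rightarrow> bool"
  assumes "n \<ge> 1" and "unit_interval_order n prec"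
  shows "length (q_of n prec) = n \<and> q_of n prec ! 0 = 0 \<and>
         (\<forall>i. 1 \<le> i \<and> i < n \<longrightarrow> q_of n prec ! i \<le> q_of n prec ! (i - 1) + 1)"
proof -
  have area: "area_sequence (q_of n prec)"
    and levels: "mset (q_of n prec) = image_mset (lev prec) (mset_set {1..n})"
    using qword_invariant[OF assms(2) assms(1) order_refl] unfolding q_of_def by auto
  have "length (q_of n prec) = n"
    using arg_cong[OF levels, of size] by simp
  then show ?thesis using area unfolding area_sequence_def by simp
qed

end
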